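(* Let $X_1,\dots,X_n$ be forests and $A\subset X=X_1\times\cdots\times X_n$. Let $A_1$ be the set of $x\in X$ for which there exist $x^1,\dots,x^n\in A$ with $x_j=x^j_j\ge x^i_j$ for all $1\le i,j\le n$, and let $A_2=\{y\in X: y\le x\text{ for some }x\in A_1\}$. Then $A_2$ contains the c.h-envelope $\widehat A$ of $A$.
   Context: A partially ordered set $Y$ is a forest if for every $y_0\in Y$ the set $\{y\ge y_0\}$ is finite and totally ordered. On $X$, $y\le x$ means $y_i\le x_i$ for all $i$. A subset $B\subset X$ is hereditary if $x\in B$, $y\le x$ imply $y\in B$. Points $x,y$ are $c$-comparable if $x_i,y_i$ are comparable for every $i$, and then $x\vee y=(\max(x_i,y_i))_i$. $B$ is concave if $x\vee y\in B$ whenever $x,y\in B$ are $c$-comparable. The c.h-envelope $\widehat A$ is the smallest concave hereditary subset of $X$ containing $A$. *)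

theory Defs
  imports Main
begin

definition forest_on :: "'a set \<Rightarrow> ('a \<Rightarrow> 'a \<Rightarrow> bool) \<Rightarrow> bool" where
  "forest_on S le \<longleftrightarrow>
     (\<forall>x\<in>S. le x x) \<and>
     (\<forall>x\<in>S. \<forall>y\<in>S. le x y \<and> le y x \<longrightarrow> x = y) \<and>
     (\<forall>x\<in>S. \<forall>y\<in>S. \<forall>z\<in>S. le x y \<and> le y z \<longrightarrow> le x z) \<and>
     (\<forall>y0\<in>S. finite {y\<in>S. le y0 y} \<and>
        (\<forall>y\<in>{y\<in>S. le y0 y}. \<forall>z\<in>{y\<in>S. le y0 y}. le y z \<or> le z y))"

definition prodX :: "('i \<Rightarrow> 'a set) \<Rightarrow> ('i \<Rightarrow> 'a) set" where
  "prodX X = {x. \<forall>i. x i \<in> X i}"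

definition prod_le :: "('i \<Rightarrow> 'a \<Rightarrow> 'a \<Rightarrow> bool) \<Rightarrow> ('i \<Rightarrow> 'a) \<Rightarrow> ('i \<Rightarrow> 'a) \<Rightarrow> bool" where
  "prod_le le y x \<longleftrightarrow> (\<forall>i. le i (y i) (x i))"

definition hereditary :: "('i \<Rightarrow> 'a set) \<Rightarrow> ('i \<Rightarrow> 'a \<Rightarrow> 'a \<Rightarrow> bool) \<Rightarrow> ('i \<Rightarrow> 'a) set \<Rightarrow> bool" where
  "hereditary X le B \<longleftrightarrow> (\<forall>x\<in>B. \<forall>y\<in>prodX X. prod_le le y x \<longrightarrow> y \<in> B)"

definition c_comparable :: "('i \<Rightarrow> 'a \<Rightarrow> 'a \<Rightarrow> bool) \<Rightarrow> ('i \<Rightarrow> 'a) \<Rightarrow> ('i \<Rightarrow> 'a) \<Rightarrow> bool" where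
  "c_comparable le x y \<longleftrightarrow> (\<forall>i. le i (x i) (y i) \<or> le i (y i) (x i))"

text \<open>Coordinatewise maximum (meaningful for c-comparable points).\<close>
definition cjoin :: "('i \<Rightarrow> 'a \<Rightarrow> 'a \<Rightarrow> bool) \<Rightarrow> ('i \<Rightarrow> 'a) \<Rightarrow> ('i \<Rightarrow> 'a) \<Rightarrow> ('i \<Rightarrow> 'a)" where
  "cjoin le x y = (\<lambda>i. if le i (x i) (y i) then y i else x i)"

definition concave :: "('i \<Rightarrow> 'a \<Rightarrow> 'a \<Rightarrow> bool) \<Rightarrow> ('i \<Rightarrow> 'a) set \<Rightarrow> bool" where
  "concave le B \<longleftrightarrow> (\<forall>x\<in>B. \<forall>y\<in>B. c_comparable le x y \<longrightarrow> cjoin le x y \<in> B)"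

definition ch_envelope :: "('i \<Rightarrow> 'a set) \<Rightarrow> ('i \<Rightarrow> 'a \<Rightarrow> 'a \<Rightarrow> bool) \<Rightarrow> ('i \<Rightarrow> 'a) set \<Rightarrow> ('i \<Rightarrow> 'a) set" where
  "ch_envelope X le A =
     \<Inter>{B. B \<subseteq> prodX X \<and> A \<subseteq> B \<and> hereditary X le B \<and> concave le B}"

definition setA1 :: "('i \<Rightarrow> 'a set) \<Rightarrow> ('i \<Rightarrow> 'a \<Rightarrow> 'a \<Rightarrow> bool) \<Rightarrow> ('i \<Rightarrow> 'a) set \<Rightarrow> ('i \<Rightarrow> 'a) set" where
  "setA1 X le A = {x \<in> prodX X. \<exists>xs :: 'i \<Rightarrow> ('i \<Rightarrow> 'a).
                    (\<forall>i. xs i \<in> A) \<and>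
                    (\<forall>i j. x j = xs j j \<and> le j (xs i j) (xs j j))}"

definition setA2 :: "('i \<Rightarrow> 'a set) \<Rightarrow> ('i \<Rightarrow> 'a \<Rightarrow> 'a \<Rightarrow> bool) \<Rightarrow> ('i \<Rightarrow> 'a) set \<Rightarrow> ('i \<Rightarrow> 'a) set" where
  "setA2 X le A = {y \<in> prodX X. \<exists>x\<in>setA1 X le A. prod_le le y x}"

end

theory Submission
  imports Defs
begin

text \<open>
  \<open>A\<^sub>2\<close> is itself a concave hereditary subset of \<open>X\<close> containing \<open>A\<close>, hereditary by
  construction. For concavity let \<open>x \<le> a\<close> and \<open>y \<le> b\<close> with \<open>a, b \<in> A\<^sub>1\<close> and \<open>x, y\<close> c-comparable.
  Since the elements above a point of a forest form a chain, \<open>a\<close> and \<open>b\<close> are c-comparable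
  and \<open>x \<squnion> y \<le> a \<squnion> b\<close>. Finally \<open>A\<^sub>1\<close> is closed under \<open>\<squnion>\<close> of c-comparable points: at
  coordinate \<open>j\<close> take the witness of whichever of \<open>a\<close>, \<open>b\<close> is larger at \<open>j\<close>.
\<close>

lemma forest_on_refl: "forest_on S le \<Longrightarrow> u \<in> S \<Longrightarrow> le u u"
  unfolding forest_on_def by blast

lemma forest_on_trans:
  "forest_on S le \<Longrightarrow> u \<in> S \<Longrightarrow> v \<in> S \<Longrightarrow> w \<in> S \<Longrightarrow> le u v \<Longrightarrow> le v w \<Longrightarrow> le u w"
  unfolding forest_on_def by blast

lemma forest_on_above_comparable:
  "forest_on S le \<Longrightarrow> u \<in> S \<Longrightarrow> v \<in> S \<Longrightarrow> w \<in> S \<Longrightarrow> le u v \<Longrightarrow> le u w \<Longrightarrow> le v w \<or> le w v"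
  unfolding forest_on_def by blast

lemma forest_on_upper_bounds_comparable:
  assumes F: "forest_on S le" and S: "u \<in> S" "v \<in> S" "a \<in> S" "b \<in> S"
    and uv: "le u v \<or> le v u" and ua: "le u a" and vb: "le v b"
  shows "le a b \<or> le b a"
  using uv
proof
  assume "le u v"
  then have "le u b" using forest_on_trans[OF F S(1,2,4)] vb by blast
  then show ?thesis using forest_on_above_comparable[OF F S(1,3,4)] ua by blast
next
  assume "le v u"
  then have "le v a" using forest_on_trans[OF F S(2,1,3)] ua by blast
  then show ?thesis using forest_on_above_comparable[OF F S(2,4,3)] vb by blast
qed

lemma cjoin_in_prodX: "x \<in> prodX X \<Longrightarrow> y \<in> prodX X \<Longrightarrow> cjoin le x y \<in> prodX X"
  unfolding cjoin_def prodX_def by auto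

lemma ch_envelope_least:
  "B \<subseteq> prodX X \<Longrightarrow> A \<subseteq> B \<Longrightarrow> hereditary X le B \<Longrightarrow> concave le B
    \<Longrightarrow> ch_envelope X le A \<subseteq> B"
  unfolding ch_envelope_def by blast

lemma setA1_subset_prodX: "setA1 X le A \<subseteq> prodX X"
  unfolding setA1_def by blast

lemma setA2_subset_prodX: "setA2 X le A \<subseteq> prodX X"
  unfolding setA2_def by blast

context
  fixes X :: "'i \<Rightarrow> 'a set" and le :: "'i \<Rightarrow> 'a \<Rightarrow> 'a \<Rightarrow> bool"
  assumes forests: "\<forall>i. forest_on (X i) (le i)"
begin

lemma forest: "forest_on (X i) (le i)"
  using forests by blast

lemma prod_le_refl: "x \<in> prodX X \<Longrightarrow> prod_le le x x"
  unfolding prodX_def prod_le_def using forest_on_refl[OF forest] by blast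

lemma prod_le_trans:
  "x \<in> prodX X \<Longrightarrow> y \<in> prodX X \<Longrightarrow> z \<in> prodX X \<Longrightarrow> prod_le le x y \<Longrightarrow> prod_le le y z
    \<Longrightarrow> prod_le le x z"
  unfolding prodX_def prod_le_def by (blast intro: forest_on_trans[OF forest])
lemma c_comparable_upper_bounds:
  assumes "x \<in> prodX X" "y \<in> prodX X" "a \<in> prodX X" "b \<in> prodX X"
    and "c_comparable le x y" "prod_le le x a" "prod_le le y b"
  shows "c_comparable le a b"
  unfolding c_comparable_def
proof
  fix j
  show "le j (a j) (b j) \<or> le j (b j) (a j)"
    using assms forest_on_upper_bounds_comparable[OF forest, of "x j" j "y j" "a j" "b j"]
    unfolding prodX_def prod_le_def c_comparable_def by blast
qed

lemma cjoin_upper: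
  assumes "a \<in> prodX X" "b \<in> prodX X" "c_comparable le a b"
  shows "prod_le le a (cjoin le a b)" "prod_le le b (cjoin le a b)"
  using assms forest_on_refl[OF forest]
  unfolding prodX_def prod_le_def c_comparable_def cjoin_def by auto

lemma cjoin_least:
  "prod_le le x z \<Longrightarrow> prod_le le y z \<Longrightarrow> prod_le le (cjoin le x y) z"
  unfolding prod_le_def cjoin_def by simp

lemma cjoin_mono:
  assumes X: "x \<in> prodX X" "y \<in> prodX X" "a \<in> prodX X" "b \<in> prodX X"
    and xy: "c_comparable le x y" and xa: "prod_le le x a" and yb: "prod_le le y b"
  shows "prod_le le (cjoin le x y) (cjoin le a b)"
proof (rule cjoin_least)
  have ab: "c_comparable le a b" using c_comparable_upper_bounds[OF X xy xa yb] .
  have abX: "cjoin le a b \<in> prodX X" using cjoin_in_prodX[OF X(3,4)] .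
  show "prod_le le x (cjoin le a b)" using prod_le_trans[OF X(1,3) abX xa cjoin_upper(1)[OF X(3,4) ab]] .
  show "prod_le le y (cjoin le a b)" using prod_le_trans[OF X(2,4) abX yb cjoin_upper(2)[OF X(3,4) ab]] .
qed

lemma A_subset_setA1: "A \<subseteq> prodX X \<Longrightarrow> A \<subseteq> setA1 X le A"
  unfolding setA1_def by (auto intro!: exI[of _ "\<lambda>_. _"] simp: prod_le_refl[unfolded prod_le_def])

lemma concave_setA1:
  assumes A_sub: "A \<subseteq> prodX X"
  shows "concave le (setA1 X le A)"
  unfolding concave_def
proof (intro ballI impI)
  fix a b assume a: "a \<in> setA1 X le A" and b: "b \<in> setA1 X le A" and ab: "c_comparable le a b"
  from a obtain as where aX: "a \<in> prodX X" and as: "\<forall>i. as i \<in> A"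
    "\<forall>i j. a j = as j j \<and> le j (as i j) (as j j)" unfolding setA1_def by blast
  from b obtain bs where bX: "b \<in> prodX X" and bs: "\<forall>i. bs i \<in> A"
    "\<forall>i j. b j = bs j j \<and> le j (bs i j) (bs j j)" unfolding setA1_def by blast
  define c where "c = cjoin le a b"
  define cs where "cs = (\<lambda>j. if le j (a j) (b j) then bs j else as j)"
  have cX: "c \<in> prodX X" unfolding c_def using cjoin_in_prodX[OF aX bX] .
  have cs_A: "cs i \<in> A" for i unfolding cs_def using as(1) bs(1) by simp
  have cs_diag: "c j = cs j j" for j
    unfolding c_def cs_def cjoin_def using as(2) bs(2) by simp
  have cs_below: "le j (cs i j) (c j)" for i j
  proof -
    have "prod_le le (as i) a" "prod_le le (bs i) b"
      using as(2) bs(2) unfolding prod_le_def by auto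
    moreover have "as i \<in> prodX X" "bs i \<in> prodX X" using as(1) bs(1) A_sub by auto
    ultimately have "prod_le le (as i) c" "prod_le le (bs i) c"
      using prod_le_trans[OF _ aX cX] prod_le_trans[OF _ bX cX] cjoin_upper[OF aX bX ab]
      unfolding c_def by blast+
    then have "prod_le le (cs i) c" unfolding cs_def by simp
    then show ?thesis unfolding prod_le_def by blast
  qed
  have "c \<in> setA1 X le A"
    unfolding setA1_def using cX cs_A cs_diag cs_below by (auto intro!: exI[of _ cs])
  then show "cjoin le a b \<in> setA1 X le A" unfolding c_def .
qed

lemma A_subset_setA2: "A \<subseteq> prodX X \<Longrightarrow> A \<subseteq> setA2 X le A"
  using A_subset_setA1 prod_le_refl unfolding setA2_def by blast

lemma hereditary_setA2: "hereditary X le (setA2 X le A)"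
  unfolding hereditary_def
proof (intro ballI impI)
  fix x y assume x: "x \<in> setA2 X le A" and yX: "y \<in> prodX X" and yx: "prod_le le y x"
  from x obtain a where xX: "x \<in> prodX X" and a: "a \<in> setA1 X le A" and xa: "prod_le le x a"
    unfolding setA2_def by blast
  have "prod_le le y a" using prod_le_trans[OF yX xX _ yx xa] a setA1_subset_prodX by blast
  then show "y \<in> setA2 X le A" unfolding setA2_def using yX a by blast
qed

lemma concave_setA2:
  assumes A_sub: "A \<subseteq> prodX X"
  shows "concave le (setA2 X le A)"
  unfolding concave_def
proof (intro ballI impI)
  fix x y assume x: "x \<in> setA2 X le A" and y: "y \<in> setA2 X le A" and xy: "c_comparable le x y"
  from x obtain a where xX: "x \<in> prodX X" and a: "a \<in> setA1 X le A" and xa: "prod_le le x a"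
    unfolding setA2_def by blast
  from y obtain b where yX: "y \<in> prodX X" and b: "b \<in> setA1 X le A" and yb: "prod_le le y b"
    unfolding setA2_def by blast
  have abX: "a \<in> prodX X" "b \<in> prodX X" using a b setA1_subset_prodX by auto
  have "c_comparable le a b" using c_comparable_upper_bounds[OF xX yX abX xy xa yb] .
  then have "cjoin le a b \<in> setA1 X le A"
    using concave_setA1[OF A_sub] a b unfolding concave_def by blast
  moreover have "prod_le le (cjoin le x y) (cjoin le a b)" using cjoin_mono[OF xX yX abX xy xa yb] .
  moreover have "cjoin le x y \<in> prodX X" using cjoin_in_prodX[OF xX yX] .
  ultimately show "cjoin le x y \<in> setA2 X le A" unfolding setA2_def by blast
qed

end

theorem mainTheorem5:
  fixes X :: "'i::finite \<Rightarrow> 'a set"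
    and le :: "'i \<Rightarrow> 'a \<Rightarrow> 'a \<Rightarrow> bool"
    and A :: "('i \<Rightarrow> 'a) set"
  assumes forests: "\<forall>i. forest_on (X i) (le i)"
    and A_sub: "A \<subseteq> prodX X"
  shows "ch_envelope X le A \<subseteq> setA2 X le A"
  by (rule ch_envelope_least[OF setA2_subset_prodX A_subset_setA2[OF forests A_sub]
        hereditary_setA2[OF forests] concave_setA2[OF forests A_sub]])

end
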